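(* Let $t\ge 2$, $k\ge 1$, and let $a_1,\dots,a_t\in\mathbb{F}_2[x]$ be polynomials each coprime with $x^k-1$. Let $C$ be the binary linear $[tk,k]$ code (a $1$-generator quasi-cyclic code of co-index $k$ with generating row $(a_1,\dots,a_t)$) generated by the rows of the $k\times tk$ matrix $(\mathrm{Circ}(a_1)\mid\mathrm{Circ}(a_2)\mid\cdots\mid\mathrm{Circ}(a_t))$. Then $C$ is a $t$-CIS code.
   Context: For $a\in\mathbb{F}_2[x]$, write $a\bmod (x^k-1)=\sum_{i=0}^{k-1}\alpha_ix^i$; $\mathrm{Circ}(a)$ is the $k\times k$ circulant matrix over $\mathbb{F}_2$ whose first row is $(\alpha_0,\dots,\alpha_{k-1})$ and each subsequent row is the cyclic right shift of the previous one. A binary linear $[tk,k]$ code is $t$-CIS if its coordinate set can be partitioned into $t$ pairwise disjoint information sets, an information set being a set of $k$ coordinates whose columns in a generator matrix are linearly independent. *)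

theory Defs
  imports "HOL-Library.Z2" "HOL-Computational_Algebra.Polynomial"
begin

definition xk_minus_1 :: "nat \<Rightarrow> bit poly" where
  "xk_minus_1 k = monom 1 k - 1"

text \<open>The first row is
  (alpha_0,...,alpha_{k-1}) with a mod (x^k-1) = sum alpha_i x^i, and row i is the
  first row cyclically shifted right i times, so entry (i,c) = alpha_{(c-i) mod k}.\<close>
definition circ :: "nat \<Rightarrow> bit poly \<Rightarrow> nat \<Rightarrow> nat \<Rightarrow> bit" where
  "circ k a i c = coeff (a mod xk_minus_1 k) ((c + k - i) mod k)"

definition qc_gen :: "nat \<Rightarrow> nat \<Rightarrow> (nat \<Rightarrow> bit poly) \<Rightarrow> nat \<Rightarrow> nat \<Rightarrow> bit" where
  "qc_gen t k a i j = circ k (a (j div k)) i (j mod k)"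

definition cols_lin_indep :: "nat \<Rightarrow> (nat \<Rightarrow> nat \<Rightarrow> bit) \<Rightarrow> nat set \<Rightarrow> bool" where
  "cols_lin_indep k G S \<longleftrightarrow>
     (\<forall>c :: nat \<Rightarrow> bit. (\<forall>i<k. (\<Sum>j\<in>S. c j * G i j) = 0) \<longrightarrow> (\<forall>j\<in>S. c j = 0))"

definition info_set :: "nat \<Rightarrow> nat \<Rightarrow> (nat \<Rightarrow> nat \<Rightarrow> bit) \<Rightarrow> nat set \<Rightarrow> bool" where
  "info_set n k G S \<longleftrightarrow> S \<subseteq> {0..<n} \<and> card S = k \<and> cols_lin_indep k G S"

definition is_CIS :: "nat \<Rightarrow> nat \<Rightarrow> (nat \<Rightarrow> nat \<Rightarrow> bit) \<Rightarrow> bool" where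
  "is_CIS t k G \<longleftrightarrow>
     (\<exists>P :: nat \<Rightarrow> nat set.
        (\<forall>b<t. info_set (t * k) k G (P b)) \<and>
        (\<forall>b<t. \<forall>b'<t. b \<noteq> b' \<longrightarrow> P b \<inter> P b' = {}) \<and>
        (\<Union>b<t. P b) = {0..<t * k})"

end

theory Submission
  imports Defs
begin

text \<open>Each block \<open>Circ(a_b)\<close> of the generator matrix is nonsingular, so the \<open>t\<close> column
  blocks are disjoint information sets. A vector \<open>c\<close> in the kernel of \<open>Circ(a)\<close> yields a
  polynomial \<open>c'\<close> of degree \<open>< k\<close> (the coefficients of \<open>c\<close> in reverse order) with
  \<open>x^k - 1 | a c'\<close>; coprimality gives \<open>x^k - 1 | c'\<close>, hence \<open>c' = 0\<close>.\<close>

text \<open>The type \<open>bit\<close> is not an instance of the gcd classes, so the library's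
  \<open>coprime_dvd_mult_right_iff\<close> does not apply to \<open>bit poly\<close>; Bezout is derived directly
  for Euclidean rings.\<close>

lemma euclidean_ring_coprime_bezout:
  fixes p q :: "'a::euclidean_ring"
  assumes "coprime p q"
  shows "\<exists>u v. u * p + v * q = 1"
proof -
  define I where "I = {u * p + v * q | u v. True}"
  have I_closed: "x - d * y \<in> I" if "x \<in> I" "y \<in> I" for x y d
  proof -
    from that obtain u v u' v' where "x = u * p + v * q" "y = u' * p + v' * q"
      unfolding I_def by blast
    then have "x - d * y = (u - d * u') * p + (v - d * v') * q"
      by (simp add: algebra_simps)
    then show ?thesis
      unfolding I_def by blast
  qed
  have "p = 1 * p + 0 * q" "q = 0 * p + 1 * q"
    by simp_all
  then have pI: "p \<in> I" and qI: "q \<in> I"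
    unfolding I_def by blast+
  have "p \<noteq> 0 \<or> q \<noteq> 0"
    using assms by auto
  then obtain g where g: "g \<in> I" "g \<noteq> 0"
    and g_min: "\<And>x. x \<in> I \<Longrightarrow> x \<noteq> 0 \<Longrightarrow> euclidean_size g \<le> euclidean_size x"
    using pI qI ex_has_least_nat[of "\<lambda>g. g \<in> I \<and> g \<noteq> 0" _ euclidean_size] by blast
  have g_dvd: "g dvd x" if "x \<in> I" for x
  proof -
    have "x mod g \<in> I"
      using I_closed[OF that g(1)] by (simp add: minus_div_mult_eq_mod[symmetric])
    moreover have "euclidean_size (x mod g) < euclidean_size g"
      using g(2) by (rule mod_size_less)
    ultimately have "x mod g = 0"
      using g_min by force
    then show ?thesis
      by (simp add: dvd_eq_mod_eq_0)
  qed
  have "is_unit g"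
    using assms g_dvd[OF pI] g_dvd[OF qI] by (rule coprime_common_divisor)
  then obtain w where "1 = g * w"
    by blast
  moreover obtain u v where "g = u * p + v * q"
    using g(1) unfolding I_def by blast
  ultimately have "(w * u) * p + (w * v) * q = 1"
    by (simp add: algebra_simps)
  then show ?thesis
    by blast
qed

lemma euclidean_ring_coprime_dvd_mult:
  fixes p q c :: "'a::euclidean_ring"
  assumes "coprime p q" and "p dvd q * c"
  shows "p dvd c"
proof -
  obtain u v where "u * p + v * q = 1"
    using euclidean_ring_coprime_bezout[OF assms(1)] by blast
  then have "c = (u * c) * p + v * (q * c)"
    by (metis mult.assoc mult.commute mult_1 distrib_right)
  then show ?thesis
    using assms(2) by (metis dvd_add dvd_mult dvd_triv_right)
qed

lemma sum_mod_shift_delta: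
  fixes f :: "nat \<Rightarrow> 'a::comm_monoid_add"
  assumes "d \<le> k" and "m < k"
  shows "(\<Sum>n<k. if (n + d) mod k = m then f n else 0) = f ((m + (k - d)) mod k)"
proof -
  have "(n + d) mod k = m \<longleftrightarrow> n = (m + (k - d)) mod k" if "n < k" for n
  proof
    assume "(n + d) mod k = m"
    then have "(m + (k - d)) mod k = (n + d + (k - d)) mod k"
      by (metis mod_add_left_eq)
    also have "\<dots> = n"
      using assms that by simp
    finally show "n = (m + (k - d)) mod k" ..
  next
    assume "n = (m + (k - d)) mod k"
    then have "(n + d) mod k = (m + (k - d) + d) mod k"
      by (simp add: mod_add_left_eq)
    also have "\<dots> = m"
      using assms by simp
    finally show "(n + d) mod k = m" .
  qed
  then have "(\<Sum>n<k. if (n + d) mod k = m then f n else 0)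
      = (\<Sum>n<k. if n = (m + (k - d)) mod k then f n else 0)"
    by (intro sum.cong) auto
  also have "\<dots> = f ((m + (k - d)) mod k)"
    using assms by simp
  finally show ?thesis .
qed

lemma degree_xk_minus_1: "degree (xk_minus_1 k) = k"
proof (cases "k = 0")
  case False
  then have "degree (- 1 :: bit poly) < degree (monom (1::bit) k)"
    by (simp add: degree_monom_eq)
  then have "degree (monom 1 k + - 1 :: bit poly) = k"
    by (simp only: degree_add_eq_left) (simp add: degree_monom_eq)
  then show ?thesis
    unfolding xk_minus_1_def by simp
qed (simp add: xk_minus_1_def)

lemma xk_minus_1_dvd_monom_diff: "xk_minus_1 k dvd monom c N - monom c (N mod k)"
proof -
  have "monom c N = monom c (N mod k) * monom 1 k ^ (N div k)"
    by (simp add: mult_monom monom_power mult.commute[of "N div k"])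
  then have "monom c N - monom c (N mod k) = monom c (N mod k) * (monom 1 k ^ (N div k) - 1)"
    by (simp add: algebra_simps)
  moreover have "xk_minus_1 k dvd monom 1 k ^ (N div k) - 1"
    unfolding xk_minus_1_def power_diff_1_eq by (rule dvd_triv_left)
  ultimately show ?thesis
    by simp
qed

lemma poly_as_sum_of_monoms_lessThan:
  assumes "degree p < n"
  shows "(\<Sum>i<n. monom (coeff p i) i) = p"
  using assms poly_as_sum_of_monoms'[of p "n - 1"] by (simp add: lessThan_Suc_atMost[symmetric])

text \<open>The kernel condition of \<open>circ k a\<close> is a cyclic correlation of \<open>c\<close> with the coefficients
  of \<open>a\<close>; multiplying by the polynomial with the coefficients of \<open>c\<close> in reverse order turns it
  into a product modulo \<open>x^k - 1\<close>.\<close>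

definition reversed_poly :: "nat \<Rightarrow> (nat \<Rightarrow> 'a::comm_monoid_add) \<Rightarrow> 'a poly" where
  "reversed_poly k c = (\<Sum>u<k. monom (c u) (k - 1 - u))"

lemma coeff_reversed_poly:
  assumes "j < k"
  shows "coeff (reversed_poly k c) (k - 1 - j) = c j"
proof -
  have "coeff (reversed_poly k c) (k - 1 - j) = (\<Sum>u<k. if u = j then c u else 0)"
    unfolding reversed_poly_def coeff_sum coeff_monom using assms by (intro sum.cong) auto
  then show ?thesis
    using assms by simp
qed

lemma degree_reversed_poly_less: "0 < k \<Longrightarrow> degree (reversed_poly k c) < k"
  unfolding reversed_poly_def by (intro degree_sum_less le_less_trans[OF degree_monom_le]) auto

lemma circ_kernel_dvd:
  assumes kernel: "\<forall>i<k. (\<Sum>u<k. c u * circ k a i u) = 0"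
  shows "xk_minus_1 k dvd (a mod xk_minus_1 k) * reversed_poly k c"
proof (cases "k = 0")
  case False
  define p where "p = xk_minus_1 k"
  define A where "A = a mod p"
  \<comment> \<open>\<open>R\<close> is the product with exponents reduced mod \<open>k\<close>; its coefficient \<open>m\<close> is the
     kernel sum of row \<open>k - 1 - m\<close>.\<close>
  define R where "R = (\<Sum>n<k. \<Sum>u<k. monom (coeff A n * c u) ((n + (k - 1 - u)) mod k))"
  have "p \<noteq> 0"
    using False degree_xk_minus_1[of k] by (auto simp: p_def)
  then have "degree A < k"
    using degree_mod_less'[of p a] False by (cases "A = 0") (simp_all add: A_def p_def degree_xk_minus_1)
  then have "A * reversed_poly k c
      = (\<Sum>n<k. monom (coeff A n) n) * (\<Sum>u<k. monom (c u) (k - 1 - u))"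
    by (simp only: poly_as_sum_of_monoms_lessThan reversed_poly_def)
  also have "\<dots> = (\<Sum>n<k. \<Sum>u<k. monom (coeff A n * c u) (n + (k - 1 - u)))"
    by (simp only: sum_distrib_right) (simp only: sum_distrib_left mult_monom)
  finally have product:
    "A * reversed_poly k c = (\<Sum>n<k. \<Sum>u<k. monom (coeff A n * c u) (n + (k - 1 - u)))" .
  have "p dvd A * reversed_poly k c - R"
    unfolding product R_def p_def sum_subtractf[symmetric] by (intro dvd_sum xk_minus_1_dvd_monom_diff)
  moreover have "coeff R m = 0" for m
  proof -
    have "coeff R m = (\<Sum>u<k. \<Sum>n<k. if (n + (k - 1 - u)) mod k = m then coeff A n * c u else 0)"
      unfolding R_def coeff_sum coeff_monom by (rule sum.swap)
    also have "\<dots> = 0"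
    proof (cases "m < k")
      case True
      have "(\<Sum>n<k. if (n + (k - 1 - u)) mod k = m then coeff A n * c u else 0)
          = c u * circ k a (k - 1 - m) u" if "u < k" for u
      proof -
        have "k - (k - 1 - u) = u + 1" and "u + k - (k - 1 - m) = m + (u + 1)"
          using True that by auto
        moreover have "(\<Sum>n<k. if (n + (k - 1 - u)) mod k = m then coeff A n * c u else 0)
            = coeff A ((m + (k - (k - 1 - u))) mod k) * c u"
          using True sum_mod_shift_delta[where f = "\<lambda>n. coeff A n * c u"] by simp
        ultimately show ?thesis
          by (simp only: circ_def A_def p_def mult.commute)
      qed
      then show ?thesis
        using kernel True by simp
    qed (auto intro!: sum.neutral)
    finally show ?thesis .
  qed
  then have "R = 0"
    by (simp add: poly_eqI)
  ultimately show ?thesis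
    by (simp add: A_def p_def)
qed (simp add: reversed_poly_def)

lemma cols_lin_indep_circ:
  assumes "coprime a (xk_minus_1 k)"
  shows "cols_lin_indep k (circ k a) {..<k}"
  unfolding cols_lin_indep_def
proof (intro allI impI ballI)
  fix c :: "nat \<Rightarrow> bit" and j
  assume kernel: "\<forall>i<k. (\<Sum>u\<in>{..<k}. c u * circ k a i u) = 0" and j: "j \<in> {..<k}"
  have "xk_minus_1 k \<noteq> 0"
    using j degree_xk_minus_1[of k] by auto
  have "xk_minus_1 k dvd (a mod xk_minus_1 k) * reversed_poly k c"
    using circ_kernel_dvd kernel by simp
  moreover have "coprime (xk_minus_1 k) (a mod xk_minus_1 k)"
    using assms \<open>xk_minus_1 k \<noteq> 0\<close> by (simp add: coprime_commute)
  ultimately have "xk_minus_1 k dvd reversed_poly k c"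
    by (rule euclidean_ring_coprime_dvd_mult[rotated])
  moreover have "degree (reversed_poly k c) < degree (xk_minus_1 k)"
    using j by (simp add: degree_xk_minus_1 degree_reversed_poly_less)
  ultimately have "reversed_poly k c = 0"
    by (metis dvd_imp_degree_le not_le)
  then show "c j = 0"
    using coeff_reversed_poly[of j k c] j by simp
qed

lemma cols_lin_indep_reindex:
  assumes "inj_on f S"
    and "\<And>i j. i < k \<Longrightarrow> j \<in> S \<Longrightarrow> G i (f j) = H i j"
    and "cols_lin_indep k H S"
  shows "cols_lin_indep k G (f ` S)"
  unfolding cols_lin_indep_def
proof (intro allI impI ballI)
  fix c :: "nat \<Rightarrow> bit" and j
  assume kernel: "\<forall>i<k. (\<Sum>j\<in>f ` S. c j * G i j) = 0" and "j \<in> f ` S"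
  have "(\<Sum>x\<in>S. c (f x) * H i x) = 0" if "i < k" for i
  proof -
    have "(\<Sum>x\<in>S. c (f x) * H i x) = (\<Sum>x\<in>S. c (f x) * G i (f x))"
      using assms(2) that by (intro sum.cong) simp_all
    also have "\<dots> = (\<Sum>j\<in>f ` S. c j * G i j)"
      using sum.reindex[OF assms(1), of "\<lambda>j. c j * G i j"] by (simp add: comp_def)
    finally show ?thesis
      using kernel that by simp
  qed
  then have "\<forall>x\<in>S. c (f x) = 0"
    using assms(3)[unfolded cols_lin_indep_def, THEN spec[of _ "\<lambda>x. c (f x)"]] by blast
  then show "c j = 0"
    using \<open>j \<in> f ` S\<close> by blast
qed

lemma is_CIS_if_blocks_lin_indep:
  assumes "\<And>b. b < t \<Longrightarrow> cols_lin_indep k G ((\<lambda>u. b * k + u) ` {..<k})"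
  shows "is_CIS t k G"
proof -
  define P where "P b = (\<lambda>u. b * k + u) ` {..<k}" for b
  have block_div: "(b * k + u) div k = b" if "u < k" for b u
    using that by auto
  have info: "info_set (t * k) k G (P b)" if "b < t" for b
  proof -
    have "b * k + k \<le> t * k"
      using that by (metis add.commute mult_Suc mult_le_mono1 Suc_leI)
    then have "P b \<subseteq> {0..<t * k}"
      by (auto simp: P_def)
    moreover have "card (P b) = k"
      unfolding P_def by (subst card_image) (auto simp: inj_on_def)
    ultimately show ?thesis
      using assms that by (simp add: info_set_def P_def)
  qed
  have disjoint: "P b \<inter> P b' = {}" if "b \<noteq> b'" for b b'
  proof -
    have "b = b'" if mem: "x \<in> P b" "x \<in> P b'" for x
    proof -
      obtain u u' where u: "u < k" "x = b * k + u" and u': "u' < k" "x = b' * k + u'"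
        using mem unfolding P_def by blast
      have "b = x div k"
        using block_div[OF u(1)] u(2) by simp
      also have "\<dots> = b'"
        using block_div[OF u'(1)] u'(2) by simp
      finally show "b = b'" .
    qed
    then show ?thesis
      using \<open>b \<noteq> b'\<close> by blast
  qed
  have "(\<Union>b<t. P b) = {0..<t * k}"
  proof
    show "(\<Union>b<t. P b) \<subseteq> {0..<t * k}"
      using info by (auto simp: info_set_def)
    show "{0..<t * k} \<subseteq> (\<Union>b<t. P b)"
    proof
      fix j assume "j \<in> {0..<t * k}"
      then have "0 < k"
        by (cases "k = 0") auto
      then have "j div k < t" and "j mod k < k" and "j = j div k * k + j mod k"
        using \<open>j \<in> {0..<t * k}\<close> by (auto simp: less_mult_imp_div_less)
      then show "j \<in> (\<Union>b<t. P b)"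
        unfolding P_def by blast
    qed
  qed
  then show ?thesis
    unfolding is_CIS_def using info disjoint by (intro exI[of _ P]) blast
qed

lemma qc_gen_block: "u < k \<Longrightarrow> qc_gen t k a i (b * k + u) = circ k (a b) i u"
  by (simp add: qc_gen_def)

theorem proposition4:
  fixes t k :: nat and a :: "nat \<Rightarrow> bit poly"
  assumes "t \<ge> 2" and "k \<ge> 1"
    and "\<forall>b<t. coprime (a b) (xk_minus_1 k)"
  shows "is_CIS t k (qc_gen t k a)"
proof (rule is_CIS_if_blocks_lin_indep)
  fix b
  assume "b < t"
  show "cols_lin_indep k (qc_gen t k a) ((\<lambda>u. b * k + u) ` {..<k})"
  proof (rule cols_lin_indep_reindex)
    show "inj_on (\<lambda>u. b * k + u) {..<k}"
      by (simp add: inj_on_def)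
    show "qc_gen t k a i (b * k + u) = circ k (a b) i u" if "u \<in> {..<k}" for i u
      using that by (simp add: qc_gen_block)
    show "cols_lin_indep k (circ k (a b)) {..<k}"
      using assms(3) \<open>b < t\<close> by (simp add: cols_lin_indep_circ)
  qed
qed

end
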